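(* For any $\lambda>0$ and any configuration $\eta$, $$\mathrm{w}^*_n = 2\sup\{\varepsilon\ge0:\ \mathcal V^{(1+\varepsilon)}\in\mathrm{cross}^*(n)\}$$ and $$\mathrm{w}_n\ \ge\ 2\sqrt{1-\inf\{r\le 1:\ \mathcal O^{(r)}\in \mathrm{cross}(n+\sqrt{1-r^2},\,n-1)\}^2},$$ where the supremum is taken to be $0$ and the infimum to be $1$ when the respective set is empty.
   Context: $\eta$ is a (locally finite) point configuration in $\mathbb R^2$ (a Poisson process of intensity $\lambda\cdot\mathrm{Leb}$ under $\mathbb P_\lambda$). For $r\ge0$, $\mathcal O^{(r)}=\bigcup_{x\in\mathrm{supp}(\eta)}B(x,r)$ and $\mathcal V^{(r)}=\mathbb R^2\setminus\mathcal O^{(r)}$; $\mathcal O=\mathcal O^{(1)}$, $\mathcal V=\mathcal V^{(1)}$. For a set $S$, "$S\in\mathrm{cross}(a,h)$" means $S$ contains a path inside $[-a,a]\times[-h,h]$ joining its left and right sides; $\mathrm{cross}(n)=\mathrm{cross}(n,n)$, and "$S\in\mathrm{cross}^*(n)$" means $S$ contains a path inside $[-n,n]^2$ joining its left and right sides. A horizontal crossing of $[-n,n]^2$ is a path in $[-n,n]^2$ joining $\{-n\}\times[-n,n]$ to $\{n\}\times[-n,n]$. $\mathrm{w}_n=2\sup_\gamma\mathrm{dist}(\gamma,\mathcal V)$ over horizontal crossings $\gamma\subset\mathcal O$ and $\mathrm{w}^*_n=2\sup_\gamma\mathrm{dist}(\gamma,\mathcal O)$ over horizontal crossings $\gamma\subset\mathcal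 V$ (each $0$ if no such crossing exists). *)

theory Defs
  imports "HOL-Analysis.Analysis"
begin

type_synonym pt = "real \<times> real"

text \<open>A point configuration eta, identified with its support: a locally finite set of points.\<close>
definition locally_finite_config :: "pt set \<Rightarrow> bool" where
  "locally_finite_config P \<longleftrightarrow> (\<forall>K. bounded K \<longrightarrow> finite (P \<inter> K))"

definition occ :: "pt set \<Rightarrow> real \<Rightarrow> pt set" where
  "occ P r = (\<Union>x\<in>P. cball x r)"

definition vac :: "pt set \<Rightarrow> real \<Rightarrow> pt set" where
  "vac P r = UNIV - occ P r"

definition rect :: "real \<Rightarrow> real \<Rightarrow> pt set" where
  "rect a h = {-a..a} \<times> {-h..h}"

definition cross :: "pt set \<Rightarrow> real \<Rightarrow> real \<Rightarrow> bool" where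
  "cross S a h \<longleftrightarrow> (\<exists>g. path g \<and> path_image g \<subseteq> S \<inter> rect a h
      \<and> fst (pathstart g) = -a \<and> fst (pathfinish g) = a)"

definition cross_star :: "pt set \<Rightarrow> real \<Rightarrow> bool" where
  "cross_star S n \<longleftrightarrow> (\<exists>g. path g \<and> path_image g \<subseteq> S \<inter> rect n n
      \<and> fst (pathstart g) = -n \<and> fst (pathfinish g) = n)"

definition hcrossing :: "real \<Rightarrow> (real \<Rightarrow> pt) \<Rightarrow> bool" where
  "hcrossing n g \<longleftrightarrow> path g \<and> path_image g \<subseteq> rect n n
      \<and> fst (pathstart g) = -n \<and> fst (pathfinish g) = n"

text \<open>Distance between sets, with values in the extended reals (infinite if one set is empty).\<close>
definition sdist :: "pt set \<Rightarrow> pt set \<Rightarrow> ereal" where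
  "sdist A B = Inf {ereal (dist x y) | x y. x \<in> A \<and> y \<in> B}"

definition w_occ :: "pt set \<Rightarrow> real \<Rightarrow> ereal" where
  "w_occ P n = (if \<exists>g. hcrossing n g \<and> path_image g \<subseteq> occ P 1
      then 2 * Sup {sdist (path_image g) (vac P 1) | g. hcrossing n g \<and> path_image g \<subseteq> occ P 1}
      else 0)"

definition w_vac :: "pt set \<Rightarrow> real \<Rightarrow> ereal" where
  "w_vac P n = (if \<exists>g. hcrossing n g \<and> path_image g \<subseteq> vac P 1
      then 2 * Sup {sdist (path_image g) (occ P 1) | g. hcrossing n g \<and> path_image g \<subseteq> vac P 1}
      else 0)"

end

theory Submission
  imports Defs
begin

text \<open>
A vacant crossing stays at distance at least \<epsilon> from the occupied set exactly when (up to the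
boundary case) it lies in the vacant set of radius 1 + \<epsilon>, so the two suprema agree.

For the occupied part, let O^(r) cross the box [-(n + s), n + s] x [-(n-1), n-1], where
s = sqrt (1 - r^2). By Stewart's theorem, every point of the segment between two centres at
distance at most 2r is the centre of a disc of radius s inside the union of the two unit discs.
The centres of the r-discs met by the crossing are finitely many, and the connectedness of the
crossing links the first of them to the last by a chain of centres at mutual distance at most 2r.
The polygon through this chain, prolonged horizontally by 1 - s at both ends, is a horizontal
crossing of [-n,n]^2 at distance at least s from the vacant set, so w_n \<ge> 2s. Since
r |-> 2 sqrt (1 - r^2) is continuous, the bound passes to the infimum over r.
\<close>

lemma sdist_le_dist: "x \<in> A \<Longrightarrow> y \<in> B \<Longrightarrow> sdist A B \<le> ereal (dist x y)"
  unfolding sdist_def by (rule Inf_lower) blast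

lemma sdist_ge:
  assumes "\<And>x y. x \<in> A \<Longrightarrow> y \<in> B \<Longrightarrow> e \<le> dist x y"
  shows "ereal e \<le> sdist A B"
  unfolding sdist_def using assms by (auto intro: Inf_greatest)

lemma sdist_nonneg: "0 \<le> sdist A B"
  using sdist_ge[of A B 0] by (simp add: zero_ereal_def)

lemma cross_star_iff_hcrossing:
  "cross_star S n \<longleftrightarrow> (\<exists>g. hcrossing n g \<and> path_image g \<subseteq> S)"
  unfolding cross_star_def hcrossing_def by blast

lemma vac_antimono: "r \<le> t \<Longrightarrow> vac P t \<subseteq> vac P r"
  unfolding vac_def occ_def by auto

lemma subset_vac_if_less_sdist_occ:
  assumes S: "S \<subseteq> vac P r" and r: "0 \<le> r" and e: "ereal e < sdist S (occ P r)"
  shows "S \<subseteq> vac P (r + e)"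
proof
  fix x assume x: "x \<in> S"
  show "x \<in> vac P (r + e)"
  proof (rule ccontr)
    assume "x \<notin> vac P (r + e)"
    then obtain c where c: "c \<in> P" "dist c x \<le> r + e" unfolding vac_def occ_def by auto
    define d where "d = dist c x"
    have "d > r" using x S c(1) unfolding d_def vac_def occ_def by force
    define y where "y = c + (r / d) *\<^sub>R (x - c)"
    \<comment> \<open>the point of the sphere of radius r around c nearest to x\<close>
    have "dist c y = r" using \<open>d > r\<close> r unfolding y_def d_def by (auto simp: dist_norm norm_minus_commute)
    hence "y \<in> occ P r" using c(1) unfolding occ_def by force
    have "x - y = (1 - r / d) *\<^sub>R (x - c)" unfolding y_def by (simp add: algebra_simps)
    moreover have "0 \<le> 1 - r / d" using \<open>d > r\<close> r by simp
    ultimately have "dist x y = (1 - r / d) * d"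
      by (simp add: dist_norm d_def norm_minus_commute)
    also have "\<dots> = d - r" using \<open>d > r\<close> r by (simp add: field_simps)
    finally have "dist x y \<le> e" using c(2) unfolding d_def by simp
    have "sdist S (occ P r) \<le> ereal (dist x y)" by (rule sdist_le_dist[OF x \<open>y \<in> occ P r\<close>])
    also have "\<dots> \<le> ereal e" using \<open>dist x y \<le> e\<close> by simp
    finally show False using e by simp
  qed
qed

lemma le_sdist_occ_if_subset_vac:
  assumes "S \<subseteq> vac P (r + e)"
  shows "ereal e \<le> sdist S (occ P r)"
proof (rule sdist_ge)
  fix x y assume x: "x \<in> S" and y: "y \<in> occ P r"
  obtain c where c: "c \<in> P" "dist c y \<le> r" using y unfolding occ_def by auto
  have "dist c x > r + e" using x assms c(1) unfolding vac_def occ_def by force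
  with c(2) dist_triangle[of c x y] show "e \<le> dist x y" by (simp add: dist_commute)
qed

lemma Sup_sdist_vacant_crossings:
  assumes "\<exists>g. hcrossing m g \<and> path_image g \<subseteq> vac P 1"
  shows "Sup {sdist (path_image g) (occ P 1) | g. hcrossing m g \<and> path_image g \<subseteq> vac P 1}
    = Sup (ereal ` {\<epsilon>::real. \<epsilon> \<ge> 0 \<and> cross_star (vac P (1 + \<epsilon>)) m})"
    (is "Sup ?W = Sup (ereal ` ?E)")
proof (rule antisym)
  have E_iff: "e \<in> ?E \<longleftrightarrow> 0 \<le> e \<and> (\<exists>g. hcrossing m g \<and> path_image g \<subseteq> vac P (1 + e))" for e
    unfolding cross_star_iff_hcrossing by simp
  with assms have "0 \<in> ?E" by simp
  show "Sup ?W \<le> Sup (ereal ` ?E)"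
  proof (rule Sup_least, clarify)
    fix g assume g: "hcrossing m g" "path_image g \<subseteq> vac P 1"
    show "sdist (path_image g) (occ P 1) \<le> Sup (ereal ` ?E)"
    proof (rule dense_le)
      fix x assume x: "x < sdist (path_image g) (occ P 1)"
      show "x \<le> Sup (ereal ` ?E)"
      proof (cases "x \<le> 0")
        case True
        have "ereal 0 \<le> Sup (ereal ` ?E)" using \<open>0 \<in> ?E\<close> by (simp add: Sup_upper)
        with True show ?thesis by (simp add: zero_ereal_def)
      next
        case False
        then obtain e where "x = ereal e" "0 \<le> e" using x by (cases x) auto
        with g x subset_vac_if_less_sdist_occ[OF g(2)] have "e \<in> ?E" using E_iff by auto
        with \<open>x = ereal e\<close> show ?thesis by (simp add: Sup_upper)
      qed
    qed
  qed
  show "Sup (ereal ` ?E) \<le> Sup ?W"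
  proof (rule Sup_least)
    fix y assume "y \<in> ereal ` ?E"
    then obtain e where "y = ereal e" "e \<in> ?E" by blast
    then obtain g where g: "hcrossing m g" "path_image g \<subseteq> vac P (1 + e)" "0 \<le> e"
      using E_iff by blast
    then have "path_image g \<subseteq> vac P 1" using vac_antimono[of 1 "1 + e" P] by simp
    with g have "sdist (path_image g) (occ P 1) \<in> ?W" by blast
    with le_sdist_occ_if_subset_vac[OF g(2)] \<open>y = ereal e\<close> show "y \<le> Sup ?W"
      by (meson Sup_upper order_trans)
  qed
qed

lemma w_vac_eq_Sup_cross_star:
  "w_vac P m = 2 * (let E = {\<epsilon>::real. \<epsilon> \<ge> 0 \<and> cross_star (vac P (1 + \<epsilon>)) m}
                in if E = {} then 0 else Sup (ereal ` E))"
proof -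
  define E where "E = {\<epsilon>::real. \<epsilon> \<ge> 0 \<and> cross_star (vac P (1 + \<epsilon>)) m}"
  have ex_iff: "(\<exists>g. hcrossing m g \<and> path_image g \<subseteq> vac P 1) \<longleftrightarrow> E \<noteq> {}"
  proof
    assume "\<exists>g. hcrossing m g \<and> path_image g \<subseteq> vac P 1"
    then have "0 \<in> E" unfolding E_def cross_star_iff_hcrossing by simp
    then show "E \<noteq> {}" by blast
  next
    assume "E \<noteq> {}"
    then obtain e g where "0 \<le> e" "hcrossing m g" "path_image g \<subseteq> vac P (1 + e)"
      unfolding E_def cross_star_iff_hcrossing by blast
    moreover have "vac P (1 + e) \<subseteq> vac P 1" using \<open>0 \<le> e\<close> by (intro vac_antimono) simp
    ultimately show "\<exists>g. hcrossing m g \<and> path_image g \<subseteq> vac P 1" by blast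
  qed
  have "w_vac P m = 2 * (if E = {} then 0 else Sup (ereal ` E))"
  proof (cases "E = {}")
    case False
    with ex_iff Sup_sdist_vacant_crossings[of m P, folded E_def] show ?thesis
      unfolding w_vac_def by simp
  next
    case True
    with ex_iff have no_crossing: "\<not> (\<exists>g. hcrossing m g \<and> path_image g \<subseteq> vac P 1)" by blast
    from True show ?thesis unfolding w_vac_def if_not_P[OF no_crossing] by simp
  qed
  then show ?thesis unfolding E_def Let_def .
qed

lemma Stewart_identity:
  fixes c1 c2 q :: "'a::real_inner"
  shows "(1 - t) * (dist c1 q)\<^sup>2 + t * (dist c2 q)\<^sup>2
         = t * (1 - t) * (dist c1 c2)\<^sup>2 + (dist ((1 - t) *\<^sub>R c1 + t *\<^sub>R c2) q)\<^sup>2"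
proof -
  define u where "u = c2 - c1"
  define v where "v = q - ((1 - t) *\<^sub>R c1 + t *\<^sub>R c2)"
  have d: "dist c1 q = norm (t *\<^sub>R u + v)" "dist c2 q = norm (v - (1 - t) *\<^sub>R u)"
    "dist c1 c2 = norm u" "dist ((1 - t) *\<^sub>R c1 + t *\<^sub>R c2) q = norm v"
    unfolding u_def v_def dist_norm by (simp_all add: norm_minus_commute algebra_simps)
  show ?thesis unfolding d power2_norm_eq_inner
    by (simp add: inner_add_left inner_add_right inner_diff_left
        inner_diff_right inner_commute power2_eq_square algebra_simps)
qed

lemma cball_segment_point_subset_Un_cball:
  fixes c1 c2 p :: "'a::real_inner"
  assumes "dist c1 c2 \<le> 2 * r" "0 \<le> r" "r \<le> \<rho>" "p \<in> closed_segment c1 c2"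
  shows "cball p (sqrt (\<rho>\<^sup>2 - r\<^sup>2)) \<subseteq> cball c1 \<rho> \<union> cball c2 \<rho>"
proof
  fix q assume "q \<in> cball p (sqrt (\<rho>\<^sup>2 - r\<^sup>2))"
  then have "(dist p q)\<^sup>2 \<le> \<rho>\<^sup>2 - r\<^sup>2"
    using assms(2,3) power_mono[of "dist p q" "sqrt (\<rho>\<^sup>2 - r\<^sup>2)" 2] power_mono[of r \<rho> 2]
    by simp
  obtain t where t: "0 \<le> t" "t \<le> 1" "p = (1 - t) *\<^sub>R c1 + t *\<^sub>R c2"
    using assms(4) unfolding closed_segment_def by auto
  have "t * (1 - t) \<le> 1 / 4"
    using zero_le_power2[of "2 * t - 1"] by (simp add: power2_eq_square algebra_simps)
  moreover have "(dist c1 c2)\<^sup>2 \<le> 4 * r\<^sup>2"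
    using power_mono[OF assms(1) zero_le_dist, of 2] by (simp add: power_mult_distrib)
  ultimately have "t * (1 - t) * (dist c1 c2)\<^sup>2 \<le> r\<^sup>2"
    using t(1,2) mult_mono[of "t * (1 - t)" "1/4" "(dist c1 c2)\<^sup>2" "4 * r\<^sup>2"] by simp
  with Stewart_identity[of t c1 q c2] t \<open>(dist p q)\<^sup>2 \<le> \<rho>\<^sup>2 - r\<^sup>2\<close>
  have "(1 - t) * (dist c1 q)\<^sup>2 + t * (dist c2 q)\<^sup>2 \<le> \<rho>\<^sup>2" by simp
  define m where "m = min ((dist c1 q)\<^sup>2) ((dist c2 q)\<^sup>2)"
  have "m = (1 - t) * m + t * m" by (simp add: algebra_simps)
  also have "\<dots> \<le> (1 - t) * (dist c1 q)\<^sup>2 + t * (dist c2 q)\<^sup>2"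
    using t(1,2) by (intro add_mono mult_left_mono) (auto simp: m_def)
  also have "\<dots> \<le> \<rho>\<^sup>2" by fact
  finally have "(dist c1 q)\<^sup>2 \<le> \<rho>\<^sup>2 \<or> (dist c2 q)\<^sup>2 \<le> \<rho>\<^sup>2" by (simp add: m_def min_le_iff_disj)
  moreover have "0 \<le> \<rho>" using assms(2,3) by simp
  ultimately have "dist c1 q \<le> \<rho> \<or> dist c2 q \<le> \<rho>" using power2_le_imp_le by blast
  then show "q \<in> cball c1 \<rho> \<union> cball c2 \<rho>" by simp
qed

definition erosion :: "'a::metric_space set \<Rightarrow> real \<Rightarrow> 'a set" where
  "erosion S s = {p. cball p s \<subseteq> S}"

lemma erosion_subset: "0 \<le> s \<Longrightarrow> erosion S s \<subseteq> S"
  unfolding erosion_def by auto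

lemma erosion_mono: "S \<subseteq> T \<Longrightarrow> erosion S s \<subseteq> erosion T s"
  unfolding erosion_def by auto

lemma cball_subset_erosion_cball: "cball c (\<rho> - s) \<subseteq> erosion (cball c \<rho>) s"
proof (clarsimp simp: erosion_def subset_iff)
  fix p q assume "dist c p \<le> \<rho> - s" "dist p q \<le> s"
  with dist_triangle[of c q p] show "dist c q \<le> \<rho>" by linarith
qed

lemma sdist_compl_ge_if_subset_erosion:
  assumes "A \<subseteq> erosion S s"
  shows "ereal s \<le> sdist A (UNIV - S)"
proof (rule sdist_ge)
  fix x y assume "x \<in> A" "y \<in> UNIV - S"
  with assms have "y \<notin> cball x s" unfolding erosion_def by blast
  then show "s \<le> dist x y" by simp
qed

lemma closed_segment_subset_erosion_occ:
  assumes "c \<in> P" "c' \<in> P" "dist c c' \<le> 2 * r" "0 \<le> r" "r \<le> 1"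
  shows "closed_segment c c' \<subseteq> erosion (occ P 1) (sqrt (1 - r\<^sup>2))"
proof
  fix p assume "p \<in> closed_segment c c'"
  then have "cball p (sqrt (1 - r\<^sup>2)) \<subseteq> cball c 1 \<union> cball c' 1"
    using cball_segment_point_subset_Un_cball[OF assms(3,4,5)] by simp
  also have "\<dots> \<subseteq> occ P 1" using assms(1,2) unfolding occ_def by blast
  finally show "p \<in> erosion (occ P 1) (sqrt (1 - r\<^sup>2))" unfolding erosion_def by blast
qed

lemma w_occ_nonneg: "0 \<le> w_occ P m"
proof (cases "\<exists>g. hcrossing m g \<and> path_image g \<subseteq> occ P 1")
  case True
  then obtain g where g: "hcrossing m g" "path_image g \<subseteq> occ P 1" by blast
  have "0 \<le> sdist (path_image g) (vac P 1)" by (rule sdist_nonneg)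
  also have "\<dots> \<le> Sup {sdist (path_image g) (vac P 1) | g. hcrossing m g \<and> path_image g \<subseteq> occ P 1}"
    by (rule Sup_upper) (use g in blast)
  finally show ?thesis unfolding w_occ_def using True by simp
next
  case False
  then show ?thesis unfolding w_occ_def by (subst if_not_P) auto
qed

lemma w_occ_ge_if_hcrossing_in_erosion:
  assumes "hcrossing N h" "path_image h \<subseteq> erosion (occ P 1) s" "0 \<le> s"
  shows "ereal (2 * s) \<le> w_occ P N"
proof -
  have h: "hcrossing N h \<and> path_image h \<subseteq> occ P 1"
    using assms erosion_subset by blast
  have "ereal (2 * s) = 2 * ereal s" by simp
  also have "\<dots> \<le> 2 * sdist (path_image h) (vac P 1)"
    using sdist_compl_ge_if_subset_erosion[OF assms(2)] unfolding vac_def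
    by (rule ereal_mult_left_mono) simp
  also have "\<dots> \<le> 2 * Sup {sdist (path_image g) (vac P 1) | g. hcrossing N g \<and> path_image g \<subseteq> occ P 1}"
    by (rule ereal_mult_left_mono, rule Sup_upper) (use h in auto)
  also have "\<dots> = w_occ P N" unfolding w_occ_def using h by auto
  finally show ?thesis .
qed

lemma path_stop_at_level:
  fixes g :: "real \<Rightarrow> 'a::real_normed_vector" and f :: "'a \<Rightarrow> real"
  assumes g: "path g" and f: "continuous_on UNIV f"
    and "f (pathstart g) < a" "a \<le> f (pathfinish g)"
  obtains h where "path h" "pathstart h = pathstart g" "f (pathfinish h) = a"
    "path_image h \<subseteq> path_image g \<inter> {x. f x \<le> a}"
proof -
  define S where "S = {x. f x < a}"
  have "open S" unfolding S_def by (rule open_Collect_less[OF f continuous_on_const])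
  then have "interior S = S" by (rule interior_open)
  have "closed {x. f x \<le> a}" by (rule closed_Collect_le[OF f continuous_on_const])
  then have closure_S: "closure S \<subseteq> {x. f x \<le> a}"
    unfolding S_def by (rule closure_minimal[rotated]) auto
  have "pathstart g \<in> S" using assms(3) unfolding S_def by simp
  then have "pathstart g \<in> closure S" by (rule closure_subset[THEN subsetD])
  moreover have "pathfinish g \<notin> S" using assms(4) unfolding S_def by simp
  ultimately obtain h where h: "path h" "pathstart h = pathstart g" "path_image h \<subseteq> path_image g"
      "path_image h - {pathfinish h} \<subseteq> interior S" "pathfinish h \<in> frontier S"
    by (rule exists_path_subpath_to_frontier[OF g])
  from h(5) have "pathfinish h \<in> closure S" "pathfinish h \<notin> S"
    using \<open>interior S = S\<close> unfolding frontier_def by auto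
  with closure_S have end_level: "f (pathfinish h) = a" unfolding S_def by fastforce
  have "f x \<le> a" if "x \<in> path_image h" for x
  proof (cases "x = pathfinish h")
    case False
    with that h(4) \<open>interior S = S\<close> have "x \<in> S" by blast
    then show ?thesis unfolding S_def by simp
  qed (use end_level in simp)
  with h(3) have "path_image h \<subseteq> path_image g \<inter> {x. f x \<le> a}" by blast
  with h(1,2) end_level show ?thesis by (rule that)
qed

lemma hcrossing_in_path:
  assumes g: "path g" and "0 < N" and strip: "path_image g \<subseteq> UNIV \<times> {-N..N}"
    and "fst (pathstart g) \<le> -N" "N \<le> fst (pathfinish g)"
  obtains h where "hcrossing N h" "path_image h \<subseteq> path_image g"
proof -
  have cont_fst: "continuous_on UNIV (\<lambda>x::pt. fst x)"
    by (rule linear_continuous_on[OF bounded_linear_fst])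
  moreover have "fst (pathstart g) < N" using assms by simp
  ultimately obtain h1 where h1: "path h1" "pathstart h1 = pathstart g" "fst (pathfinish h1) = N"
      "path_image h1 \<subseteq> path_image g \<inter> {x. fst x \<le> N}"
    using assms(5) by (rule path_stop_at_level[OF g])
  have "path (reversepath h1)" using h1(1) by simp
  moreover have "continuous_on UNIV (\<lambda>x::pt. - fst x)" by (rule continuous_on_minus[OF cont_fst])
  moreover have "- fst (pathstart (reversepath h1)) < N" using h1(3) \<open>0 < N\<close> by simp
  moreover have "N \<le> - fst (pathfinish (reversepath h1))" using h1(2) assms(4) by simp
  ultimately obtain h2 where h2: "path h2" "pathstart h2 = pathfinish h1" "- fst (pathfinish h2) = N"
      "path_image h2 \<subseteq> path_image h1 \<inter> {x. - fst x \<le> N}"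
    by (rule path_stop_at_level) (simp_all only: pathstart_reversepath path_image_reversepath)
  have "path_image h2 \<subseteq> rect N N"
  proof
    fix x assume "x \<in> path_image h2"
    with h1(4) h2(4) have x: "x \<in> path_image g" "- fst x \<le> N" "fst x \<le> N" by auto
    with strip have "x \<in> UNIV \<times> {-N..N}" by blast
    with x(2,3) show "x \<in> rect N N" unfolding rect_def by (auto simp: mem_Times_iff)
  qed
  with h1(3) h2(1-3) have "hcrossing N (reversepath h2)" unfolding hcrossing_def by simp
  moreover have "path_image (reversepath h2) \<subseteq> path_image g" using h1(4) h2(4) by auto
  ultimately show ?thesis by (rule that)
qed

lemma connected_subset_cballs_of_linked_centres:
  fixes Z :: "'a::metric_space set"
  assumes "connected Z" "finite K" "Z \<subseteq> (\<Union>c\<in>K. cball c r)" "G \<subseteq> K"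
    and linked: "\<And>c c'. c \<in> G \<Longrightarrow> c' \<in> K \<Longrightarrow> dist c c' \<le> 2 * r \<Longrightarrow> c' \<in> G"
    and "Z \<inter> (\<Union>c\<in>G. cball c r) \<noteq> {}"
  shows "Z \<subseteq> (\<Union>c\<in>G. cball c r)"
proof -
  define U where "U = (\<Union>c\<in>G. cball c r)"
  define W where "W = (\<Union>c\<in>K - G. cball c r)"
  have "finite G" using assms(2,4) by (rule finite_subset[rotated])
  then have "closed U" unfolding U_def by (intro closed_UN) auto
  have "closed W" unfolding W_def using assms(2) by (intro closed_UN) auto
  have "Z \<subseteq> U \<union> W" unfolding U_def W_def using assms(3) by blast
  have "U \<inter> W \<inter> Z = {}"
  proof -
    have False if "x \<in> U" "x \<in> W" for x
    proof -
      from that obtain c c' where "c \<in> G" "c' \<in> K - G" "dist c x \<le> r" "dist c' x \<le> r"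
        unfolding U_def W_def by auto
      moreover from this(3,4) have "dist c c' \<le> 2 * r"
        using dist_triangle[of c c' x] by (simp add: dist_commute)
      ultimately show False using linked by blast
    qed
    then show ?thesis by blast
  qed
  from \<open>connected Z\<close> this \<open>Z \<subseteq> U \<union> W\<close> \<open>closed U\<close> \<open>closed W\<close>
  have "U \<inter> Z = {} \<or> W \<inter> Z = {}" by (rule connected_closedD)
  moreover have "U \<inter> Z \<noteq> {}" using assms(6) unfolding U_def by blast
  ultimately have "Z \<subseteq> U" using \<open>Z \<subseteq> U \<union> W\<close> by blast
  then show ?thesis unfolding U_def .
qed

lemma path_component_covering_centres:
  assumes lf: "locally_finite_config P"
    and Z: "connected Z" "bounded Z" "Z \<subseteq> occ P r" "z0 \<in> Z" "z1 \<in> Z"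
    and seg: "\<And>c c'. c \<in> P \<Longrightarrow> c' \<in> P \<Longrightarrow> (\<exists>z\<in>Z. dist c z \<le> r) \<Longrightarrow>
      (\<exists>z\<in>Z. dist c' z \<le> r) \<Longrightarrow> dist c c' \<le> 2 * r \<Longrightarrow> closed_segment c c' \<subseteq> T"
  obtains c0 c1 where "c0 \<in> P" "c1 \<in> P" "dist c0 z0 \<le> r" "dist c1 z1 \<le> r"
    "path_component T c0 c1"
proof -
  define K where "K = {c \<in> P. \<exists>z\<in>Z. dist c z \<le> r}"
  obtain x0 B where B: "Z \<subseteq> cball x0 B" using Z(2) bounded_subset_cball by blast
  have "K \<subseteq> P \<inter> cball x0 (B + r)"
  proof
    fix c assume "c \<in> K"
    then obtain z where z: "c \<in> P" "z \<in> Z" "dist c z \<le> r" unfolding K_def by blast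
    with B have "dist x0 z \<le> B" by auto
    with z(3) dist_triangle[of x0 c z] have "dist x0 c \<le> B + r" by (simp add: dist_commute)
    with z(1) show "c \<in> P \<inter> cball x0 (B + r)" by simp
  qed
  moreover have "finite (P \<inter> cball x0 (B + r))"
    using lf bounded_cball unfolding locally_finite_config_def by blast
  ultimately have "finite K" by (rule finite_subset)
  have cover: "Z \<subseteq> (\<Union>c\<in>K. cball c r)"
  proof
    fix z assume "z \<in> Z"
    with Z(3) obtain c where "c \<in> P" "z \<in> cball c r" unfolding occ_def by blast
    moreover from this(2) \<open>z \<in> Z\<close> have "\<exists>z\<in>Z. dist c z \<le> r" by auto
    ultimately show "z \<in> (\<Union>c\<in>K. cball c r)" unfolding K_def by blast
  qed
  with Z(4) obtain c0 where c0: "c0 \<in> K" "dist c0 z0 \<le> r" by auto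
  define G where "G = {c \<in> K. path_component T c0 c}"
  have "Z \<subseteq> (\<Union>c\<in>G. cball c r)"
  proof (rule connected_subset_cballs_of_linked_centres[OF Z(1) \<open>finite K\<close> cover])
    show "G \<subseteq> K" unfolding G_def by blast
    show "c' \<in> G" if "c \<in> G" "c' \<in> K" "dist c c' \<le> 2 * r" for c c'
    proof -
      from that(1) have "c \<in> K" "path_component T c0 c" unfolding G_def by auto
      moreover have "closed_segment c c' \<subseteq> T"
        using that(2,3) \<open>c \<in> K\<close> unfolding K_def by (intro seg) auto
      ultimately have "path_component T c0 c'"
        using path_component_trans path_component_linepath by blast
      with that(2) show ?thesis unfolding G_def by blast
    qed
    have "0 \<le> r" using c0(2) by (meson zero_le_dist order_trans)
    with c0 have "closed_segment c0 c0 \<subseteq> T" unfolding K_def by (intro seg) auto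
    then have "path_component T c0 c0" by (rule path_component_linepath)
    with c0(1) have "c0 \<in> G" unfolding G_def by blast
    moreover have "z0 \<in> cball c0 r" using c0(2) by simp
    ultimately show "Z \<inter> (\<Union>c\<in>G. cball c r) \<noteq> {}" using Z(4) by blast
  qed
  with Z(5) obtain c1 where "c1 \<in> G" "dist c1 z1 \<le> r" by auto
  then have "c1 \<in> P" "path_component T c0 c1" unfolding G_def K_def by auto
  moreover have "c0 \<in> P" using c0(1) unfolding K_def by blast
  ultimately show ?thesis using that c0(2) \<open>dist c1 z1 \<le> r\<close> by blast
qed

lemma path_component_horizontal_shift_erosion:
  assumes "c \<in> P" "\<bar>snd c\<bar> \<le> N" "\<bar>a\<bar> \<le> 1 - s"
  shows "path_component (erosion (occ P 1) s \<inter> (UNIV \<times> {-N..N})) c (c + (a, 0))"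
proof (rule path_component_linepath)
  have "cball c (1 - s) \<subseteq> erosion (cball c 1) s" by (rule cball_subset_erosion_cball)
  also have "\<dots> \<subseteq> erosion (occ P 1) s"
    using assms(1) unfolding occ_def by (intro erosion_mono) blast
  finally have "closed_segment c (c + (a, 0)) \<subseteq> erosion (occ P 1) s"
    using assms(3) by (intro closed_segment_subset[THEN order_trans]) (auto simp: dist_norm norm_Pair)
  moreover have "closed_segment c (c + (a, 0)) \<subseteq> UNIV \<times> {-N..N}"
    using assms(2) by (intro closed_segment_subset convex_Times convex_UNIV convex_real_interval)
      (auto simp: mem_Times_iff)
  ultimately show "closed_segment c (c + (a, 0)) \<subseteq> erosion (occ P 1) s \<inter> (UNIV \<times> {-N..N})"
    by blast
qed

lemma erosion_path_across_strip_of_cross: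
  assumes lf: "locally_finite_config P" and r: "0 \<le> r" "r \<le> 1"
    and cr: "cross (occ P r) (N + sqrt (1 - r\<^sup>2)) (N - 1)"
  obtains g where "path g"
    "path_image g \<subseteq> erosion (occ P 1) (sqrt (1 - r\<^sup>2)) \<inter> (UNIV \<times> {-N..N})"
    "fst (pathstart g) \<le> -N" "N \<le> fst (pathfinish g)"
proof -
  define s where "s = sqrt (1 - r\<^sup>2)"
  have s: "0 \<le> s" "s \<le> 1" unfolding s_def using r by (auto simp: power_le_one)
  define T where "T = erosion (occ P 1) s \<inter> (UNIV \<times> {-N..N})"
  obtain \<gamma> where \<gamma>: "path \<gamma>" "path_image \<gamma> \<subseteq> occ P r \<inter> rect (N + s) (N - 1)"
      "fst (pathstart \<gamma>) = -(N + s)" "fst (pathfinish \<gamma>) = N + s"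
    using cr unfolding cross_def s_def by blast
  have near_strip: "\<bar>snd c\<bar> \<le> N" if "\<exists>z\<in>path_image \<gamma>. dist c z \<le> r" for c
  proof -
    from that obtain z where "z \<in> rect (N + s) (N - 1)" "dist c z \<le> r" using \<gamma>(2) by blast
    with r dist_snd_le[of c z] show ?thesis unfolding rect_def by (auto simp: mem_Times_iff dist_real_def)
  qed
  obtain c0 c1 where c: "c0 \<in> P" "c1 \<in> P" "dist c0 (pathstart \<gamma>) \<le> r"
      "dist c1 (pathfinish \<gamma>) \<le> r" "path_component T c0 c1"
  proof (rule path_component_covering_centres[OF lf connected_path_image[OF \<gamma>(1)]
        bounded_path_image[OF \<gamma>(1)] _ pathstart_in_path_image pathfinish_in_path_image])
    show "path_image \<gamma> \<subseteq> occ P r" using \<gamma>(2) by blast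
    fix c c' assume cc': "c \<in> P" "c' \<in> P" "\<exists>z\<in>path_image \<gamma>. dist c z \<le> r"
      "\<exists>z\<in>path_image \<gamma>. dist c' z \<le> r" "dist c c' \<le> 2 * r"
    have "closed_segment c c' \<subseteq> UNIV \<times> {-N..N}"
      using near_strip[OF cc'(3)] near_strip[OF cc'(4)]
      by (intro closed_segment_subset convex_Times convex_UNIV convex_real_interval)
        (auto simp: mem_Times_iff)
    with closed_segment_subset_erosion_occ[OF cc'(1,2,5) r]
    show "closed_segment c c' \<subseteq> T" unfolding T_def s_def by blast
  qed
  \<comment> \<open>the chain of discs is extended horizontally by 1 - s at both ends to reach the sides of the box\<close>
  define p0 where "p0 = c0 + (- (1 - s), 0)"
  define p1 where "p1 = c1 + (1 - s, 0)"
  have "\<bar>snd c0\<bar> \<le> N" "\<bar>snd c1\<bar> \<le> N"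
    using near_strip c(3,4) pathstart_in_path_image pathfinish_in_path_image by blast+
  then have "path_component T c0 p0" "path_component T c1 p1"
    using c(1,2) s path_component_horizontal_shift_erosion unfolding p0_def p1_def T_def by auto
  with c(5) have "path_component T p0 p1" by (meson path_component_sym path_component_trans)
  then obtain g where g: "path g" "path_image g \<subseteq> T" "pathstart g = p0" "pathfinish g = p1"
    by (meson path_component_def)
  have "\<bar>fst c0 - fst (pathstart \<gamma>)\<bar> \<le> r" "\<bar>fst c1 - fst (pathfinish \<gamma>)\<bar> \<le> r"
    using order_trans[OF dist_fst_le c(3)] order_trans[OF dist_fst_le c(4)]
    by (simp_all add: dist_real_def)
  then have "fst (pathstart g) \<le> -N" "N \<le> fst (pathfinish g)"
    using \<gamma>(3,4) r unfolding g(3,4) p0_def p1_def by (simp_all add: abs_le_iff)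
  with g(1,2) show ?thesis unfolding T_def s_def by (rule that)
qed

lemma w_occ_ge_if_cross:
  assumes lf: "locally_finite_config P" and r: "0 \<le> r" "r \<le> 1"
    and cr: "cross (occ P r) (N + sqrt (1 - r\<^sup>2)) (N - 1)"
  shows "ereal (2 * sqrt (1 - r\<^sup>2)) \<le> w_occ P N"
proof -
  obtain g where g: "path g"
      "path_image g \<subseteq> erosion (occ P 1) (sqrt (1 - r\<^sup>2)) \<inter> (UNIV \<times> {-N..N})"
      "fst (pathstart g) \<le> -N" "N \<le> fst (pathfinish g)"
    by (rule erosion_path_across_strip_of_cross[OF lf r cr])
  have "0 < N" using cr unfolding cross_def rect_def by force
  moreover have "path_image g \<subseteq> UNIV \<times> {-N..N}" using g(2) by blast
  ultimately obtain h where h: "hcrossing N h" "path_image h \<subseteq> path_image g"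
    using hcrossing_in_path[OF g(1) _ _ g(3,4)] by blast
  with g(2) have "path_image h \<subseteq> erosion (occ P 1) (sqrt (1 - r\<^sup>2))" by blast
  with h(1) show ?thesis
    by (rule w_occ_ge_if_hcrossing_in_erosion) (use r in \<open>simp add: power_le_one\<close>)
qed

lemma ereal_le_at_Inf_if_continuous:
  fixes f :: "real \<Rightarrow> real"
  assumes "continuous_on (closure R) f" "R \<noteq> {}" "bdd_below R"
    and bound: "\<And>r. r \<in> R \<Longrightarrow> ereal (f r) \<le> w"
  shows "ereal (f (Inf R)) \<le> w"
proof (cases w)
  case (real w')
  then have "f ` R \<subseteq> {..w'}" using bound by auto
  then have "f ` closure R \<subseteq> {..w'}" using image_closure_subset[OF assms(1)] by blast
  then show ?thesis using closure_contains_Inf[OF assms(2,3)] real by auto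
next
  case MInf
  then show ?thesis using bound assms(2) by fastforce
qed simp

lemma w_occ_ge_Inf_cross:
  assumes "locally_finite_config P"
  shows "w_occ P N \<ge>
           ereal (2 * sqrt (1 - (let R = {r::real. 0 \<le> r \<and> r \<le> 1 \<and>
                      cross (occ P r) (N + sqrt (1 - r\<^sup>2)) (N - 1)}
                 in if R = {} then 1 else Inf R)\<^sup>2))"
proof -
  define R where "R = {r::real. 0 \<le> r \<and> r \<le> 1 \<and> cross (occ P r) (N + sqrt (1 - r\<^sup>2)) (N - 1)}"
  have "ereal (2 * sqrt (1 - (Inf R)\<^sup>2)) \<le> w_occ P N" if "R \<noteq> {}"
  proof (rule ereal_le_at_Inf_if_continuous[OF _ that])
    show "continuous_on (closure R) (\<lambda>r. 2 * sqrt (1 - r\<^sup>2))" by (intro continuous_intros)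
    show "bdd_below R" unfolding R_def by (rule bdd_belowI[of _ 0]) auto
    show "ereal (2 * sqrt (1 - r\<^sup>2)) \<le> w_occ P N" if "r \<in> R" for r
      using w_occ_ge_if_cross[OF assms] that unfolding R_def by blast
  qed
  moreover have "ereal (2 * sqrt (1 - 1\<^sup>2)) \<le> w_occ P N"
    using w_occ_nonneg[of P N] by (simp add: zero_ereal_def)
  ultimately show ?thesis unfolding R_def[symmetric] Let_def by (cases "R = {}") simp_all
qed

theorem lemma3p1:
  fixes P :: "pt set" and n :: nat
  assumes "locally_finite_config P"
  shows "(w_vac P (real n) =
           2 * (let E = {\<epsilon>::real. \<epsilon> \<ge> 0 \<and> cross_star (vac P (1 + \<epsilon>)) (real n)}
                in if E = {} then 0 else Sup (ereal ` E))) \<and>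
         (w_occ P (real n) \<ge>
           ereal (2 * sqrt (1 - (let R = {r::real. 0 \<le> r \<and> r \<le> 1 \<and>
                      cross (occ P r) (real n + sqrt (1 - r\<^sup>2)) (real n - 1)}
                 in if R = {} then 1 else Inf R)\<^sup>2)))"
  by (rule conjI[OF w_vac_eq_Sup_cross_star w_occ_ge_Inf_cross[OF assms]])

end
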